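(* Consider the multi-hop multi-channel network and Algorithm 1 described in the context, with parameter $\Delta_{est}\ge\Delta$, and assume $\delta\le\frac17$. Let $0<\epsilon<1$. Let $T_s$ be the time by which all nodes have started, and let $T_f$ be the earliest time by which each node has executed at least $\frac{48\max(2S,3\Delta_{est})}{\rho}\ln\!\left(\frac{N^2}{\epsilon}\right)$ full frames since $T_s$. Then with probability at least $1-\epsilon$, by time $T_f$ every node has discovered all its neighbors on all channels (i.e., for every link $v\to u$, $u$ has received a message from $v$).
   Context: Network: a finite set of $N$ nodes; each node $u$ has a nonempty available channel set $A_u$; $S=\max_u|A_u|$. Neighborhood on a channel is symmetric; all channels have identical propagation characteristics, so $u,v$ are neighbors on $c$ iff they are neighbors on some channel and $c\in A_u\cap A_v$. $\deg(u,c)$ is the number of neighbors of $u$ on $c$; $\Delta=\max_u\max_{c\in A_u}\deg(u,c)$. Each ordered pair of neighbors $(v,u)$ gives a link $v\to u$ with span $A_u\cap A_v$ and span-ratio $|A_u\cap A_v|/|A_u|$; $\rho$ is the minimum span-ratio over all links. A node operates on one channel at a time and cannot transmit and receive simultaneously; a node listening on $c$ throughout a real-time interval $I$ receives a message transmitted on $c$ during $I$ by a neighbor $v$ provided no other neighbor of it on $c$ transmits on $c$ at any time during $I$; no collision detection. Clocks: node $u$ has clock $C_u$ with $(1-\delta)\Delta t\le C_u(t+\Delta t)-C_u(t)\le(1+\delta)\Delta t$ for all real $t$, $\Delta t\ge0$; arbitrary offsets. Algorithm 1 (input: positive integer $\Delta_{est}$, an upper bound on $\Delta$ known to all nodes):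 each node starts at an arbitrary real time and partitions local time into consecutive frames of local length $L$, each split into three slots of local length $L/3$. At the start of each frame node $u$ picks $c$ uniformly at random from $A_u$; with probability $\min(\frac12,\frac{|A_u|}{3\Delta_{est}})$ it transmits on $c$ during each of the three slots a message with its identity and $A_u$, and otherwise listens on $c$ during the whole frame, recording each sender $v$ (with set $A$) as a neighbor with common channels $A\cap A_u$. Random choices are independent across frames and nodes. A full frame since $T_s$ is a frame starting at or after $T_s$. *)

theory Defs
  imports "HOL-Probability.Probability"
begin

definition nbr_on :: "('n \<Rightarrow> 'n \<Rightarrow> bool) \<Rightarrow> ('n \<Rightarrow> 'c set) \<Rightarrow> 'n \<Rightarrow> 'n \<Rightarrow> 'c \<Rightarrow> bool" where
  "nbr_on E A u v c \<longleftrightarrow> E u v \<and> c \<in> A u \<and> c \<in> A v"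

definition deg :: "'n set \<Rightarrow> ('n \<Rightarrow> 'n \<Rightarrow> bool) \<Rightarrow> ('n \<Rightarrow> 'c set) \<Rightarrow> 'n \<Rightarrow> 'c \<Rightarrow> nat" where
  "deg V E A u c = card {v \<in> V. nbr_on E A u v c}"

definition max_deg :: "'n set \<Rightarrow> ('n \<Rightarrow> 'n \<Rightarrow> bool) \<Rightarrow> ('n \<Rightarrow> 'c set) \<Rightarrow> nat" where
  "max_deg V E A = Max {deg V E A u c | u c. u \<in> V \<and> c \<in> A u}"

definition max_chan :: "'n set \<Rightarrow> ('n \<Rightarrow> 'c set) \<Rightarrow> nat" where
  "max_chan V A = Max ((\<lambda>u. card (A u)) ` V)"

definition min_span_ratio :: "'n set \<Rightarrow> ('n \<Rightarrow> 'n \<Rightarrow> bool) \<Rightarrow> ('n \<Rightarrow> 'c set) \<Rightarrow> real" where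
  "min_span_ratio V E A =
     Min {real (card (A u \<inter> A v)) / real (card (A u)) | u v. u \<in> V \<and> v \<in> V \<and> E v u}"

definition clock_inv :: "(real \<Rightarrow> real) \<Rightarrow> real \<Rightarrow> real" where
  "clock_inv C x = (THE t. C t = x)"

text \<open>A node with clock C starting at real time s: frame k occupies local times
  [C s + k L, C s + (k+1) L), slot j (j < 3) of frame k occupies local times
  [C s + (k + j/3) L, C s + (k + (j+1)/3) L).\<close>
definition frame_start :: "(real \<Rightarrow> real) \<Rightarrow> real \<Rightarrow> real \<Rightarrow> nat \<Rightarrow> real" where
  "frame_start C s L k = clock_inv C (C s + real k * L)"

definition frame_iv :: "(real \<Rightarrow> real) \<Rightarrow> real \<Rightarrow> real \<Rightarrow> nat \<Rightarrow> real set" where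
  "frame_iv C s L k = {frame_start C s L k ..< frame_start C s L (Suc k)}"

definition slot_iv :: "(real \<Rightarrow> real) \<Rightarrow> real \<Rightarrow> real \<Rightarrow> nat \<Rightarrow> nat \<Rightarrow> real set" where
  "slot_iv C s L k j =
     {clock_inv C (C s + (real k + real j / 3) * L) ..< clock_inv C (C s + (real k + real (Suc j) / 3) * L)}"

definition full_frames_by :: "(real \<Rightarrow> real) \<Rightarrow> real \<Rightarrow> real \<Rightarrow> real \<Rightarrow> real \<Rightarrow> nat" where
  "full_frames_by C s L Ts T =
     card {k. Ts \<le> frame_start C s L k \<and> frame_start C s L (Suc k) \<le> T}"

definition tx_prob :: "('n \<Rightarrow> 'c set) \<Rightarrow> nat \<Rightarrow> 'n \<Rightarrow> real" where
  "tx_prob A Dest u = min (1/2) (real (card (A u)) / (3 * real Dest))"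

text \<open>An outcome w assigns to every node u and frame index k the pair
  (chosen channel, transmit?). All choices are independent: product measure.\<close>
definition alg_space :: "'n set \<Rightarrow> ('n \<Rightarrow> 'c set) \<Rightarrow> nat \<Rightarrow> ('n \<times> nat \<Rightarrow> 'c \<times> bool) measure" where
  "alg_space V A Dest =
     PiM (V \<times> UNIV) (\<lambda>(u, k). measure_pmf (pair_pmf (pmf_of_set (A u)) (bernoulli_pmf (tx_prob A Dest u))))"

definition listens_at ::
  "('n \<Rightarrow> real \<Rightarrow> real) \<Rightarrow> ('n \<Rightarrow> real) \<Rightarrow> real \<Rightarrow> ('n \<times> nat \<Rightarrow> 'c \<times> bool) \<Rightarrow> 'n \<Rightarrow> 'c \<Rightarrow> real \<Rightarrow> bool" where
  "listens_at C s L \<omega> u c t \<longleftrightarrow>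
     (\<exists>k. t \<in> frame_iv (C u) (s u) L k \<and> fst (\<omega> (u, k)) = c \<and> \<not> snd (\<omega> (u, k)))"

definition transmits_at ::
  "('n \<Rightarrow> real \<Rightarrow> real) \<Rightarrow> ('n \<Rightarrow> real) \<Rightarrow> real \<Rightarrow> ('n \<times> nat \<Rightarrow> 'c \<times> bool) \<Rightarrow> 'n \<Rightarrow> 'c \<Rightarrow> real \<Rightarrow> bool" where
  "transmits_at C s L \<omega> w c t \<longleftrightarrow>
     (\<exists>k j. j < 3 \<and> t \<in> slot_iv (C w) (s w) L k j \<and> fst (\<omega> (w, k)) = c \<and> snd (\<omega> (w, k)))"

text \<open>Reception guarantee of the model: u receives v's message by real time T
  if there are a channel c and a real-time interval I (ending by T) such that
  u listens on c throughout I, v transmits a message (one slot) on c during I,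
  and no other neighbor of u on c transmits on c at any time during I.\<close>
definition received_by ::
  "('n \<Rightarrow> 'n \<Rightarrow> bool) \<Rightarrow> ('n \<Rightarrow> 'c set) \<Rightarrow> ('n \<Rightarrow> real \<Rightarrow> real) \<Rightarrow> ('n \<Rightarrow> real) \<Rightarrow> real \<Rightarrow>
   ('n \<times> nat \<Rightarrow> 'c \<times> bool) \<Rightarrow> real \<Rightarrow> 'n \<Rightarrow> 'n \<Rightarrow> bool" where
  "received_by E A C s L \<omega> T v u \<longleftrightarrow>
     (\<exists>c a b. b \<le> T \<and> nbr_on E A u v c \<and>
        (\<forall>t \<in> {a..<b}. listens_at C s L \<omega> u c t) \<and>
        (\<exists>k j. j < 3 \<and> fst (\<omega> (v, k)) = c \<and> snd (\<omega> (v, k)) \<and>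
               slot_iv (C v) (s v) L k j \<subseteq> {a..<b}) \<and>
        (\<forall>w. nbr_on E A u w c \<and> w \<noteq> v \<longrightarrow> (\<forall>t \<in> {a..<b}. \<not> transmits_at C s L \<omega> w c t)))"

end

theory Submission
  imports Defs
begin

text \<open>Fix a link v \<rightarrow> u. In every full frame k of u we pick a whole slot of v that lies inside it
  (slots are short enough for this when \<delta> \<le> 1/7). Trial k succeeds if, on some common channel c,
  u listens during frame k, v transmits during that slot, and no other neighbour of u transmits on c
  in any of its (at most two) frames meeting the slot. Since u listens on c with probability at
  least 1/(2|A u|), v transmits on c with probability at least 1/max(2S, 3\<Delta>est), and by the
  degree bound the interferers are all silent with probability at least 1/3, a trial succeeds with
  probability at least q = \<rho>/(6 max(2S, 3\<Delta>est)). Trials in frames three apart depend on disjoint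
  sets of random choices, so they are independent, and the link fails with probability at most
  exp(-q X/3) \<le> \<epsilon>/N^2. A union bound over the at most N^2 links concludes. Measurability of
  the events is obtained by replacing the real reception intervals by the countably many slots.\<close>

section \<open>Products of discrete distributions\<close>

lemma product_prob_space_measure_pmf: "product_prob_space (\<lambda>i. measure_pmf (p i))"
  by unfold_locales (simp add: prob_space_measure_pmf)

lemma indep_vars_PiM_pmf_coordinates:
  assumes "I \<noteq> {}"
  shows "prob_space.indep_vars (PiM I (\<lambda>i. measure_pmf (p i))) (\<lambda>i. measure_pmf (p i)) (\<lambda>i \<omega>. \<omega> i) I"
proof -
  interpret product_prob_space "\<lambda>i. measure_pmf (p i)" by (rule product_prob_space_measure_pmf)
  show ?thesis
  proof (subst indep_vars_iff_distr_eq_PiM'[OF assms])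
    show "random_variable (measure_pmf (p i)) (\<lambda>\<omega>. \<omega> i)" if "i \<in> I" for i
      using that by (simp add: measurable_component_singleton)
    have "distr (PiM I (\<lambda>i. measure_pmf (p i))) (PiM I (\<lambda>i. measure_pmf (p i))) (\<lambda>x. \<lambda>i\<in>I. x i)
        = distr (PiM I (\<lambda>i. measure_pmf (p i))) (PiM I (\<lambda>i. measure_pmf (p i))) (\<lambda>x. x)"
      by (rule distr_cong) (auto simp: space_PiM PiE_def extensional_restrict)
    also have "\<dots> = PiM I (\<lambda>i. measure_pmf (p i))" by (rule distr_id)
    also have "\<dots> = PiM I (\<lambda>i. distr (PiM I (\<lambda>i. measure_pmf (p i))) (measure_pmf (p i)) (\<lambda>x. x i))"
      by (rule PiM_cong) (auto simp: PiM_component)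
    finally show "distr (PiM I (\<lambda>i. measure_pmf (p i))) (PiM I (\<lambda>i. measure_pmf (p i))) (\<lambda>x. \<lambda>i\<in>I. x i)
        = PiM I (\<lambda>i. distr (PiM I (\<lambda>i. measure_pmf (p i))) (measure_pmf (p i)) (\<lambda>x. x i))" .
  qed
qed

lemma measure_PiM_pmf_INT_prod_emb_disjoint:
  fixes p :: "'i \<Rightarrow> 'a pmf"
  assumes "I \<noteq> {}" "finite T" "T \<noteq> {}" "\<And>t. t \<in> T \<Longrightarrow> J t \<subseteq> I"
    and "disjoint_family_on J T" and "\<And>t. t \<in> T \<Longrightarrow> B t \<in> sets (PiM (J t) (\<lambda>i. measure_pmf (p i)))"
  shows "measure (PiM I (\<lambda>i. measure_pmf (p i))) (\<Inter>t\<in>T. prod_emb I (\<lambda>i. measure_pmf (p i)) (J t) (B t))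
       = (\<Prod>t\<in>T. measure (PiM I (\<lambda>i. measure_pmf (p i))) (prod_emb I (\<lambda>i. measure_pmf (p i)) (J t) (B t)))"
proof -
  interpret product_prob_space "\<lambda>i. measure_pmf (p i)" by (rule product_prob_space_measure_pmf)
  have "P.indep_vars (\<lambda>t. PiM (J t) (\<lambda>i. measure_pmf (p i))) (\<lambda>t \<omega>. restrict (\<lambda>i. \<omega> i) (J t)) T"
    by (rule P.indep_vars_restrict[OF indep_vars_PiM_pmf_coordinates[OF assms(1)]]) (use assms in auto)
  then have "P.indep_sets (\<lambda>t. {(\<lambda>\<omega>. restrict (\<lambda>i. \<omega> i) (J t)) -` B \<inter> space (PiM I (\<lambda>i. measure_pmf (p i)))
      | B. B \<in> sets (PiM (J t) (\<lambda>i. measure_pmf (p i)))}) T"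
    unfolding P.indep_vars_def2 by auto
  moreover have "prod_emb I (\<lambda>i. measure_pmf (p i)) (J t) (B t)
      = (\<lambda>\<omega>. restrict (\<lambda>i. \<omega> i) (J t)) -` B t \<inter> space (PiM I (\<lambda>i. measure_pmf (p i)))" for t
    by (simp add: prod_emb_def space_PiM)
  ultimately show ?thesis
    using assms by (intro P.indep_setsD) auto
qed

lemma measure_PiM_pmf_prod_emb_PiE:
  fixes p :: "'i \<Rightarrow> 'a pmf"
  assumes "J \<subseteq> I" "finite J"
  shows "measure (PiM I (\<lambda>i. measure_pmf (p i))) (prod_emb I (\<lambda>i. measure_pmf (p i)) J (PiE J X))
      = (\<Prod>j\<in>J. measure_pmf.prob (p j) (X j))"
proof -
  interpret product_prob_space "\<lambda>i. measure_pmf (p i)" by (rule product_prob_space_measure_pmf)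
  show ?thesis
    using emeasure_PiM_emb[OF assms, of X]
    by (simp add: P.emeasure_eq_measure measure_pmf.emeasure_eq_measure prod_ennreal prod_nonneg)
qed

lemma pred_PiM_pmf_coordinate:
  fixes p :: "'i \<Rightarrow> 'a pmf"
  shows "Measurable.pred (PiM I (\<lambda>i. measure_pmf (p i))) (\<lambda>\<omega>. Q (\<omega> i))"
proof (cases "i \<in> I")
  case True
  have "{\<omega> \<in> space (PiM I (\<lambda>i. measure_pmf (p i))). Q (\<omega> i)}
      = (\<lambda>\<omega>. \<omega> i) -` {x. Q x} \<inter> space (PiM I (\<lambda>i. measure_pmf (p i)))"
    by auto
  also have "\<dots> \<in> sets (PiM I (\<lambda>i. measure_pmf (p i)))"
    by (rule measurable_sets[OF measurable_component_singleton[OF True]]) simp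
  finally show ?thesis by (simp add: pred_def)
next
  case False
  then have "{\<omega> \<in> space (PiM I (\<lambda>i. measure_pmf (p i))). Q (\<omega> i)}
      = (if Q undefined then space (PiM I (\<lambda>i. measure_pmf (p i))) else {})"
    by (auto simp: space_PiM PiE_def extensional_def)
  then show ?thesis unfolding pred_def by simp
qed

lemma measure_pmf_compl_singleton: "measure_pmf.prob p (- {a}) = 1 - pmf p a"
  using measure_pmf.prob_compl[of "{a}" p] by (simp add: measure_pmf_single Compl_eq_Diff_UNIV)

lemma card_le_mult_card_residue_class:
  fixes K :: "nat set"
  assumes "finite K" "n > 0"
  obtains r where "card K \<le> n * card {k \<in> K. k mod n = r}"
proof (rule ccontr)
  assume "\<not> thesis"
  then have less: "n * card {k \<in> K. k mod n = r} < card K" for r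
    using that by (meson not_le)
  have "K = (\<Union>r<n. {k \<in> K. k mod n = r})" using assms(2) by auto
  then have "card K \<le> (\<Sum>r<n. card {k \<in> K. k mod n = r})"
    by (metis card_UN_le finite_lessThan)
  then have "n * card K \<le> (\<Sum>r<n. n * card {k \<in> K. k mod n = r})"
    by (metis mult_le_mono2 sum_distrib_left)
  also have "\<dots> < (\<Sum>r<n. card K)"
    by (rule sum_strict_mono) (use less assms(2) in auto)
  finally show False by simp
qed

section \<open>Clocks with bounded drift\<close>

locale drifting_clock =
  fixes C :: "real \<Rightarrow> real" and \<delta> :: real
  assumes drift: "\<And>t d. d \<ge> 0 \<Longrightarrow> (1 - \<delta>) * d \<le> C (t + d) - C t \<and> C (t + d) - C t \<le> (1 + \<delta>) * d"
    and drift_less_one: "\<delta> < 1"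
begin

lemma drift_nonneg: "\<delta> \<ge> 0"
  using drift[of 1 0] by simp

lemma drift_factors_pos: "1 - \<delta> > 0" "1 + \<delta> > 0"
  using drift_less_one drift_nonneg by auto

lemma clock_diff_lower: "t1 \<le> t2 \<Longrightarrow> (1 - \<delta>) * (t2 - t1) \<le> C t2 - C t1"
  using drift[of "t2 - t1" t1] by simp

lemma clock_diff_upper: "t1 \<le> t2 \<Longrightarrow> C t2 - C t1 \<le> (1 + \<delta>) * (t2 - t1)"
  using drift[of "t2 - t1" t1] by simp

lemma clock_strict_mono: "strict_mono C"
proof (rule strict_monoI)
  fix t1 t2 :: real assume "t1 < t2"
  then have "(1 - \<delta>) * (t2 - t1) > 0" using drift_factors_pos by simp
  with clock_diff_lower[of t1 t2] \<open>t1 < t2\<close> show "C t1 < C t2" by linarith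
qed

lemma continuous_on_clock: "continuous_on S C"
proof -
  have "\<bar>C x - C y\<bar> \<le> (1 + \<delta>) * \<bar>x - y\<bar>" for x y
    using clock_diff_upper[of x y] clock_diff_upper[of y x] strict_monoD[OF clock_strict_mono, of x y]
      strict_monoD[OF clock_strict_mono, of y x]
    by (cases x y rule: linorder_cases) auto
  then have "(1 + \<delta>)-lipschitz_on S C"
    by (intro lipschitz_onI) (use drift_nonneg in \<open>auto simp: dist_real_def\<close>)
  then show ?thesis by (rule lipschitz_on_continuous_on)
qed

lemma clock_surj: "\<exists>t. C t = y"
proof -
  define r where "r = \<bar>y - C 0\<bar> / (1 - \<delta>)"
  have r: "r \<ge> 0" "(1 - \<delta>) * r = \<bar>y - C 0\<bar>"
    using drift_factors_pos by (auto simp: r_def)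
  have "C (- r) \<le> y" using clock_diff_lower[of "- r" 0] r by (simp add: abs_if split: if_splits)
  moreover have "y \<le> C r" using clock_diff_lower[of 0 r] r by (simp add: abs_if split: if_splits)
  ultimately show ?thesis
    using IVT'[of C "- r" y r] continuous_on_clock r(1) by auto
qed

lemma clock_clock_inv [simp]: "C (clock_inv C y) = y"
proof -
  obtain t where t: "C t = y" using clock_surj by blast
  have "C (THE t. C t = y) = y"
    by (rule theI[of _ t]) (use t strict_mono_eq[OF clock_strict_mono] in auto)
  then show ?thesis by (simp add: clock_inv_def)
qed

lemma clock_inv_clock [simp]: "clock_inv C (C t) = t"
  using clock_clock_inv[of "C t"] strict_mono_eq[OF clock_strict_mono] by blast

lemma clock_inv_diff_bounds:
  assumes "y1 \<le> y2"
  shows "(y2 - y1) / (1 + \<delta>) \<le> clock_inv C y2 - clock_inv C y1"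
    and "clock_inv C y2 - clock_inv C y1 \<le> (y2 - y1) / (1 - \<delta>)"
proof -
  let ?t1 = "clock_inv C y1" and ?t2 = "clock_inv C y2"
  have le: "?t1 \<le> ?t2"
    using assms strict_mono_less_eq[OF clock_strict_mono, of ?t1 ?t2] by simp
  show "(y2 - y1) / (1 + \<delta>) \<le> ?t2 - ?t1"
    using clock_diff_upper[OF le] drift_factors_pos by (simp add: divide_le_eq mult.commute)
  show "?t2 - ?t1 \<le> (y2 - y1) / (1 - \<delta>)"
    using clock_diff_lower[OF le] drift_factors_pos by (simp add: le_divide_eq mult.commute)
qed

end

locale frame_schedule = drifting_clock +
  fixes s L :: real
  assumes frame_length_pos: "L > 0"
begin

text \<open>frame_time z is the real time at which the node has run for z frames of local length L:
  frame k is [frame_time k, frame_time (k + 1)) and its slot j is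
  [frame_time (k + j/3), frame_time (k + (j + 1)/3)).\<close>
definition frame_time :: "real \<Rightarrow> real" where
  "frame_time z = clock_inv C (C s + z * L)"

lemma frame_time_diff_bounds:
  assumes "z1 \<le> z2"
  shows "(z2 - z1) * L / (1 + \<delta>) \<le> frame_time z2 - frame_time z1"
    and "frame_time z2 - frame_time z1 \<le> (z2 - z1) * L / (1 - \<delta>)"
proof -
  have le: "C s + z1 * L \<le> C s + z2 * L" using assms frame_length_pos by (simp add: mult_right_mono)
  have eq: "(C s + z2 * L) - (C s + z1 * L) = (z2 - z1) * L" by (simp add: algebra_simps)
  show "(z2 - z1) * L / (1 + \<delta>) \<le> frame_time z2 - frame_time z1"
    using clock_inv_diff_bounds(1)[OF le] eq by (simp add: frame_time_def)
  show "frame_time z2 - frame_time z1 \<le> (z2 - z1) * L / (1 - \<delta>)"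
    using clock_inv_diff_bounds(2)[OF le] eq by (simp add: frame_time_def)
qed

lemma frame_time_strict_mono: "z1 < z2 \<Longrightarrow> frame_time z1 < frame_time z2"
  using frame_time_diff_bounds(1)[of z1 z2] frame_length_pos drift_factors_pos
  by (smt (verit) divide_pos_pos mult_pos_pos)

lemma frame_time_mono: "z1 \<le> z2 \<Longrightarrow> frame_time z1 \<le> frame_time z2"
  using frame_time_strict_mono by (cases "z1 = z2") (auto simp: order_le_less)

lemma frame_time_lower: "z \<ge> 0 \<Longrightarrow> s + z * L / (1 + \<delta>) \<le> frame_time z"
  using frame_time_diff_bounds(1)[of 0 z] by (simp add: frame_time_def)

lemma frame_time_unbounded: "\<exists>n :: nat. T \<le> frame_time (real n)"
proof -
  obtain n :: nat where n: "real n > (T - s) * (1 + \<delta>) / L" using reals_Archimedean2 by blast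
  then have "T - s \<le> real n * L / (1 + \<delta>)"
    using drift_factors_pos frame_length_pos by (simp add: field_simps)
  then show ?thesis using frame_time_lower[of "real n"] by (intro exI[of _ n]) simp
qed

lemma frame_start_eq: "frame_start C s L k = frame_time (real k)"
  by (simp add: frame_start_def frame_time_def)

lemma frame_iv_eq: "frame_iv C s L k = {frame_time (real k) ..< frame_time (real k + 1)}"
  by (simp add: frame_iv_def frame_start_eq add.commute)

lemma slot_iv_eq:
  "slot_iv C s L k j = {frame_time (real k + real j / 3) ..< frame_time (real k + real (Suc j) / 3)}"
  by (simp add: slot_iv_def frame_time_def)

lemma slot_iv_div_mod: "slot_iv C s L (n div 3) (n mod 3) = {frame_time (real n / 3) ..< frame_time (real (Suc n) / 3)}"
proof -
  have n: "real n = 3 * real (n div 3) + real (n mod 3)"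
    by (metis div_mult_mod_eq mult.commute of_nat_add of_nat_mult of_nat_numeral)
  then have "real (n div 3) + real (n mod 3) / 3 = real n / 3"
    and "real (n div 3) + real (Suc (n mod 3)) / 3 = real (Suc n) / 3"
    by (simp_all add: field_simps)
  then show ?thesis by (simp only: slot_iv_eq)
qed

lemma slot_iv_subset_frame_iv: "j < 3 \<Longrightarrow> slot_iv C s L k j \<subseteq> frame_iv C s L k"
  unfolding slot_iv_eq frame_iv_eq
  using frame_time_mono[of "real k" "real k + real j / 3"]
    frame_time_mono[of "real k + real (Suc j) / 3" "real k + 1"]
  by auto

lemma frame_iv_unique:
  assumes "t \<in> frame_iv C s L k1" "t \<in> frame_iv C s L k2"
  shows "k1 = k2"
proof (rule ccontr)
  assume "k1 \<noteq> k2"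
  then have "frame_time (real k1 + 1) \<le> frame_time (real k2) \<or> frame_time (real k2 + 1) \<le> frame_time (real k1)"
    using frame_time_mono[of "real k1 + 1" "real k2"] frame_time_mono[of "real k2 + 1" "real k1"] by linarith
  with assms show False by (auto simp: frame_iv_eq)
qed

lemma frame_duration_bounds:
  "L / (1 + \<delta>) \<le> frame_time (real k + 1) - frame_time (real k)"
  "frame_time (real k + 1) - frame_time (real k) \<le> L / (1 - \<delta>)"
  using frame_time_diff_bounds[of "real k" "real k + 1"] by auto

lemma frame_iv_diameter:
  "t1 \<in> frame_iv C s L k \<Longrightarrow> t2 \<in> frame_iv C s L k \<Longrightarrow> t2 - t1 < L / (1 - \<delta>)"
  using frame_duration_bounds(2)[of k] by (auto simp: frame_iv_eq)

lemma exists_slot_after: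
  assumes "s \<le> \<alpha>"
  shows "\<exists>n. \<alpha> \<le> frame_time (real n / 3) \<and> frame_time (real (Suc n) / 3) \<le> \<alpha> + 2 * L / (3 * (1 - \<delta>))"
proof -
  have slot_length: "frame_time (real (Suc k) / 3) - frame_time (real k / 3) \<le> L / (3 * (1 - \<delta>))" for k
    using frame_time_diff_bounds(2)[of "real k / 3" "real (Suc k) / 3"] by (simp add: field_simps)
  obtain m :: nat where "\<alpha> \<le> frame_time (real m)" using frame_time_unbounded by blast
  then have "\<alpha> \<le> frame_time (real (3 * m) / 3)" by simp
  then have ex: "\<exists>n. \<alpha> \<le> frame_time (real n / 3)" by blast
  define n where "n = (LEAST n. \<alpha> \<le> frame_time (real n / 3))"
  have n: "\<alpha> \<le> frame_time (real n / 3)" unfolding n_def by (rule LeastI_ex[OF ex])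
  have "frame_time (real n / 3) \<le> \<alpha> + L / (3 * (1 - \<delta>))"
  proof (cases n)
    case 0
    have "L / (3 * (1 - \<delta>)) > 0" using frame_length_pos drift_factors_pos by simp
    then show ?thesis using assms 0 by (simp add: frame_time_def)
  next
    case (Suc k)
    then have "frame_time (real k / 3) < \<alpha>"
      using not_less_Least[of k "\<lambda>n. \<alpha> \<le> frame_time (real n / 3)"] by (simp add: n_def)
    then show ?thesis using slot_length[of k] Suc by simp
  qed
  moreover have "2 * L / (3 * (1 - \<delta>)) = L / (3 * (1 - \<delta>)) + L / (3 * (1 - \<delta>))" by simp
  ultimately show ?thesis using n slot_length[of n] by (intro exI[of _ n] conjI) linarith+
qed

lemma frames_meeting_interval:
  assumes "\<delta> \<le> 1/2" and "b - a \<le> L / (3 * (1 - \<delta>))"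
  shows "finite {k. frame_iv C s L k \<inter> {a..<b} \<noteq> {}}"
    and "card {k. frame_iv C s L k \<inter> {a..<b} \<noteq> {}} \<le> 2"
proof -
  let ?K = "{k. frame_iv C s L k \<inter> {a..<b} \<noteq> {}}"
  have close: "k2 < k1 + 2" if k1: "k1 \<in> ?K" and k2: "k2 \<in> ?K" for k1 k2
  proof (rule ccontr)
    assume "\<not> k2 < k1 + 2"
    obtain t1 where t1: "t1 \<in> frame_iv C s L k1" "a \<le> t1" using k1 by auto
    obtain t2 where t2: "t2 \<in> frame_iv C s L k2" "t2 < b" using k2 by auto
    have "t1 < frame_time (real k1 + 1)" "frame_time (real k2) \<le> t2"
      using t1 t2 by (auto simp: frame_iv_eq)
    moreover have "frame_time (real k1 + 2) \<le> frame_time (real k2)"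
      using \<open>\<not> k2 < k1 + 2\<close> by (intro frame_time_mono) simp
    moreover have "L / (1 + \<delta>) \<le> frame_time (real k1 + 2) - frame_time (real k1 + 1)"
      using frame_duration_bounds(1)[of "Suc k1"] by (simp add: add.commute add.left_commute)
    moreover have "L / (3 * (1 - \<delta>)) \<le> L / (1 + \<delta>)"
      using assms(1) frame_length_pos drift_factors_pos by (intro divide_left_mono) auto
    ultimately show False using assms(2) t1(2) t2(2) by linarith
  qed
  show fin: "finite ?K"
  proof (cases "?K = {}")
    case False
    then obtain k1 where "k1 \<in> ?K" by blast
    then have "?K \<subseteq> {..<k1 + 2}" using close by blast
    then show ?thesis using finite_subset by blast
  qed simp
  show "card ?K \<le> 2"
  proof (cases "?K = {}")
    case False
    define m where "m = Min ?K"
    have m: "m \<in> ?K" unfolding m_def by (rule Min_in[OF fin False])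
    have "?K \<subseteq> {m, Suc m}"
    proof
      fix k assume k: "k \<in> ?K"
      then have "m \<le> k" using fin by (simp add: m_def)
      moreover have "k < m + 2" using close[OF m k] .
      ultimately show "k \<in> {m, Suc m}" by auto
    qed
    then have "card ?K \<le> card {m, Suc m}" by (rule card_mono[rotated]) simp
    then show ?thesis by simp
  qed simp
qed

definition full_frames :: "real \<Rightarrow> real \<Rightarrow> nat set" where
  "full_frames Ts T = {k. Ts \<le> frame_time (real k) \<and> frame_time (real k + 1) \<le> T}"

lemma full_frames_by_eq_card: "full_frames_by C s L Ts T = card (full_frames Ts T)"
  by (simp add: full_frames_by_def full_frames_def frame_start_eq add.commute)

lemma finite_full_frames: "finite (full_frames Ts T)"
proof -
  obtain m :: nat where m: "T \<le> frame_time (real m)" using frame_time_unbounded by blast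
  have "full_frames Ts T \<subseteq> {..<m}"
  proof
    fix k assume "k \<in> full_frames Ts T"
    then have "frame_time (real k + 1) \<le> frame_time (real m)" using m by (simp add: full_frames_def)
    then have "\<not> real m < real k + 1" using frame_time_strict_mono[of "real m" "real k + 1"] by linarith
    then show "k \<in> {..<m}" by simp
  qed
  then show ?thesis using finite_subset by blast
qed

lemma full_frames_mono: "T1 \<le> T2 \<Longrightarrow> full_frames Ts T1 \<subseteq> full_frames Ts T2"
  by (auto simp: full_frames_def)

lemma full_frames_unbounded: "\<exists>T. n \<le> card (full_frames Ts T)"
proof -
  obtain m :: nat where m: "Ts \<le> frame_time (real m)" using frame_time_unbounded by blast
  have "{m..<m + n} \<subseteq> full_frames Ts (frame_time (real (m + n)))"
  proof
    fix k assume k: "k \<in> {m..<m + n}"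
    then have "Ts \<le> frame_time (real k)" using m frame_time_mono[of "real m" "real k"] by auto
    moreover have "frame_time (real k + 1) \<le> frame_time (real (m + n))"
      using k by (intro frame_time_mono) auto
    ultimately show "k \<in> full_frames Ts (frame_time (real (m + n)))" by (simp add: full_frames_def)
  qed
  then have "card {m..<m + n} \<le> card (full_frames Ts (frame_time (real (m + n))))"
    by (rule card_mono[OF finite_full_frames])
  then show ?thesis by auto
qed

lemma full_frames_at_last_frame_end:
  assumes "full_frames Ts T \<noteq> {}"
  obtains k where "full_frames Ts T \<subseteq> full_frames Ts (frame_time (real (Suc k)))"
    and "frame_time (real (Suc k)) \<le> T"
proof -
  define k where "k = Max (full_frames Ts T)"
  have k: "k \<in> full_frames Ts T" using assms finite_full_frames by (simp add: k_def)
  have "full_frames Ts T \<subseteq> full_frames Ts (frame_time (real (Suc k)))"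
  proof
    fix k' assume k': "k' \<in> full_frames Ts T"
    then have "k' \<le> k" using finite_full_frames by (simp add: k_def)
    then have "frame_time (real k' + 1) \<le> frame_time (real (Suc k))" by (intro frame_time_mono) simp
    with k' show "k' \<in> full_frames Ts (frame_time (real (Suc k)))" by (simp add: full_frames_def)
  qed
  moreover have "frame_time (real (Suc k)) \<le> T" using k by (simp add: full_frames_def add.commute)
  ultimately show thesis by (rule that)
qed

text \<open>The number of full frames grows only at frame ends, so a positive bound is first
  reached at some frame end.\<close>
lemma full_frames_threshold:
  assumes "X > 0"
  obtains \<theta> where "\<And>T. X \<le> real (card (full_frames Ts T)) \<longleftrightarrow> \<theta> \<le> T"
proof -
  let ?G = "\<lambda>T. X \<le> real (card (full_frames Ts T))"
  have G_mono: "?G T2" if "?G T1" "T1 \<le> T2" for T1 T2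
    using that card_mono[OF finite_full_frames full_frames_mono[OF that(2), of Ts]] by linarith
  have G_at_frame_end: "\<exists>k. ?G (frame_time (real (Suc k))) \<and> frame_time (real (Suc k)) \<le> T" if "?G T" for T
  proof -
    have "full_frames Ts T \<noteq> {}" using that assms by auto
    then obtain k where k: "full_frames Ts T \<subseteq> full_frames Ts (frame_time (real (Suc k)))"
      "frame_time (real (Suc k)) \<le> T" by (rule full_frames_at_last_frame_end)
    then show ?thesis using that card_mono[OF finite_full_frames k(1)] by (intro exI[of _ k]) simp
  qed
  obtain T0 where "real (nat \<lceil>X\<rceil>) \<le> real (card (full_frames Ts T0))"
    using full_frames_unbounded[of "nat \<lceil>X\<rceil>"] by (meson of_nat_le_iff)
  then have "?G T0" by linarith
  then obtain k0 where k0: "?G (frame_time (real (Suc k0)))" using G_at_frame_end by blast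
  define k where "k = (LEAST k. ?G (frame_time (real (Suc k))))"
  have Gk: "?G (frame_time (real (Suc k)))"
    unfolding k_def by (rule LeastI[where P = "\<lambda>k. ?G (frame_time (real (Suc k)))", OF k0])
  show thesis
  proof (rule that[of "frame_time (real (Suc k))"], rule iffI)
    fix T assume "?G T"
    then obtain k' where k': "?G (frame_time (real (Suc k')))" "frame_time (real (Suc k')) \<le> T"
      using G_at_frame_end by blast
    have "k \<le> k'" unfolding k_def by (rule Least_le) (rule k'(1))
    then have "frame_time (real (Suc k)) \<le> frame_time (real (Suc k'))" by (intro frame_time_mono) simp
    with k'(2) show "frame_time (real (Suc k)) \<le> T" by linarith
  qed (use G_mono Gk in blast)
qed

end

section \<open>The network and its random choices\<close>

locale multichannel_network =
  fixes V :: "'n set" and A :: "'n \<Rightarrow> 'c set" and E :: "'n \<Rightarrow> 'n \<Rightarrow> bool"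
    and C :: "'n \<Rightarrow> real \<Rightarrow> real" and s :: "'n \<Rightarrow> real"
    and L \<delta> Ts :: real and Dest :: nat
  assumes finV: "finite V"
    and chans: "\<forall>u \<in> V. finite (A u) \<and> A u \<noteq> {}"
    and E_in: "\<forall>u v. E u v \<longrightarrow> u \<in> V \<and> v \<in> V"
    and E_sym: "\<forall>u v. E u v \<longrightarrow> E v u"
    and E_irrefl: "\<forall>u. \<not> E u u"
    and E_common: "\<forall>u v. E u v \<longrightarrow> A u \<inter> A v \<noteq> {}"
    and Dest_pos: "Dest > 0"
    and Dest_ge: "max_deg V E A \<le> Dest"
    and clock: "\<forall>u \<in> V. \<forall>t d. d \<ge> 0 \<longrightarrow>
                  (1 - \<delta>) * d \<le> C u (t + d) - C u t \<and> C u (t + d) - C u t \<le> (1 + \<delta>) * d"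
    and delta_le: "\<delta> \<le> 1/7"
    and L_pos: "L > 0"
    and Ts: "\<forall>u \<in> V. s u \<le> Ts"
begin

definition choice_pmf :: "'n \<times> nat \<Rightarrow> ('c \<times> bool) pmf" where
  "choice_pmf j = pair_pmf (pmf_of_set (A (fst j))) (bernoulli_pmf (tx_prob A Dest (fst j)))"

abbreviation outcomes :: "('n \<times> nat \<Rightarrow> 'c \<times> bool) measure" where
  "outcomes \<equiv> PiM (V \<times> UNIV) (\<lambda>j. measure_pmf (choice_pmf j))"

abbreviation cylinder :: "('n \<times> nat) set \<Rightarrow> ('n \<times> nat \<Rightarrow> 'c \<times> bool) set \<Rightarrow> ('n \<times> nat \<Rightarrow> 'c \<times> bool) set" where
  "cylinder J B \<equiv> prod_emb (V \<times> UNIV) (\<lambda>j. measure_pmf (choice_pmf j)) J B"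

text \<open>With probability at least 1 / tx_denom a node transmits on any given one of its channels.\<close>
definition tx_denom :: real where
  "tx_denom = max (2 * real (max_chan V A)) (3 * real Dest)"

lemma prob_space_outcomes: "prob_space outcomes"
  by (rule prob_space_PiM) (simp add: prob_space_measure_pmf)

lemma alg_space_eq_outcomes: "alg_space V A Dest = outcomes"
  unfolding alg_space_def choice_pmf_def by (rule PiM_cong) (auto simp: case_prod_beta)

lemma measure_cylinder_compl:
  assumes "J \<subseteq> V \<times> UNIV" and "B \<in> sets (PiM J (\<lambda>j. measure_pmf (choice_pmf j)))"
  shows "measure outcomes (cylinder J (space (PiM J (\<lambda>j. measure_pmf (choice_pmf j))) - B))
    = 1 - measure outcomes (cylinder J B)"
proof -
  have "cylinder J (space (PiM J (\<lambda>j. measure_pmf (choice_pmf j))) - B) = space outcomes - cylinder J B"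
    by (auto simp: prod_emb_def space_PiM PiE_def extensional_def)
  then show ?thesis
    using assms by (simp add: prob_space.prob_compl[OF prob_space_outcomes] measurable_prod_emb)
qed

lemma node_frame_schedule: "x \<in> V \<Longrightarrow> frame_schedule (C x) \<delta> L"
  by unfold_locales (use clock delta_le L_pos in auto)

lemma card_chans_pos: "x \<in> V \<Longrightarrow> card (A x) > 0"
  using chans by (simp add: card_gt_0_iff)

lemma deg_le_Dest:
  assumes "x \<in> V" "c \<in> A x"
  shows "deg V E A x c \<le> Dest"
proof -
  have "{deg V E A u c | u c. u \<in> V \<and> c \<in> A u} = (\<lambda>(u, c). deg V E A u c) ` (SIGMA u:V. A u)"
    by auto
  then have "finite {deg V E A u c | u c. u \<in> V \<and> c \<in> A u}"
    using finV chans by (simp add: finite_SigmaI)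
  then have "deg V E A x c \<le> max_deg V E A"
    unfolding max_deg_def by (rule Max_ge) (use assms in blast)
  with Dest_ge show ?thesis by simp
qed

lemma finite_span_ratios:
  "finite {real (card (A u \<inter> A v)) / real (card (A u)) | u v. u \<in> V \<and> v \<in> V \<and> E v u}"
proof -
  have "{real (card (A u \<inter> A v)) / real (card (A u)) | u v. u \<in> V \<and> v \<in> V \<and> E v u}
      \<subseteq> (\<lambda>(u, v). real (card (A u \<inter> A v)) / real (card (A u))) ` (V \<times> V)"
    by auto
  then show ?thesis using finV finite_subset by blast
qed

lemma min_span_ratio_le:
  assumes "E v u"
  shows "min_span_ratio V E A \<le> real (card (A u \<inter> A v)) / real (card (A u))"
  unfolding min_span_ratio_def by (rule Min_le[OF finite_span_ratios]) (use assms E_in in blast)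

lemma min_span_ratio_pos:
  assumes "E v u"
  shows "min_span_ratio V E A > 0"
proof -
  have "x > 0" if x_in: "x \<in> {real (card (A u \<inter> A v)) / real (card (A u)) | u v. u \<in> V \<and> v \<in> V \<and> E v u}" for x
  proof -
    obtain u' v' where x: "x = real (card (A u' \<inter> A v')) / real (card (A u'))" "u' \<in> V" "E v' u'"
      using x_in by blast
    have "A u' \<inter> A v' \<noteq> {}" "finite (A u' \<inter> A v')" using E_common E_sym chans x by blast+
    then show "x > 0" using x card_chans_pos[OF x(2)] by (simp add: card_gt_0_iff)
  qed
  moreover have "{real (card (A u \<inter> A v)) / real (card (A u)) | u v. u \<in> V \<and> v \<in> V \<and> E v u} \<noteq> {}"
    using assms E_in by blast
  ultimately show ?thesis unfolding min_span_ratio_def using finite_span_ratios by simp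
qed

lemma tx_denom_pos: "tx_denom > 0"
  unfolding tx_denom_def using Dest_pos by simp

lemma pmf_choice_listen:
  assumes "x \<in> V" "c \<in> A x"
  shows "1 / (2 * real (card (A x))) \<le> pmf (choice_pmf (x, k)) (c, False)"
proof -
  have "pmf (choice_pmf (x, k)) (c, False) = (1 - tx_prob A Dest x) / real (card (A x))"
    using chans assms by (simp add: choice_pmf_def pmf_pair tx_prob_def)
  moreover have "1 / 2 \<le> 1 - tx_prob A Dest x" by (simp add: tx_prob_def)
  ultimately show ?thesis using card_chans_pos[OF assms(1)] by (simp add: divide_right_mono field_simps)
qed

lemma pmf_choice_transmit:
  assumes "x \<in> V"
  shows "pmf (choice_pmf (x, k)) (c, True)
    = (if c \<in> A x then min (1 / (2 * real (card (A x)))) (1 / (3 * real Dest)) else 0)"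
proof -
  have "pmf (choice_pmf (x, k)) (c, True) = (if c \<in> A x then tx_prob A Dest x / real (card (A x)) else 0)"
    using chans assms by (simp add: choice_pmf_def pmf_pair tx_prob_def)
  moreover have "tx_prob A Dest x / real (card (A x)) = min (1 / (2 * real (card (A x)))) (1 / (3 * real Dest))"
    using card_chans_pos[OF assms] by (simp add: tx_prob_def min_divide_distrib_right field_simps)
  ultimately show ?thesis by simp
qed

lemma pmf_choice_transmit_lower:
  assumes "x \<in> V" "c \<in> A x"
  shows "1 / tx_denom \<le> pmf (choice_pmf (x, k)) (c, True)"
proof -
  have "2 * real (card (A x)) \<le> tx_denom"
    using assms finV unfolding tx_denom_def max_chan_def by (simp add: le_max_iff_disj)
  moreover have "3 * real Dest \<le> tx_denom" unfolding tx_denom_def by simp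
  ultimately show ?thesis
    using assms card_chans_pos[OF assms(1)] Dest_pos by (simp add: pmf_choice_transmit frac_le)
qed

text \<open>Reception during one whole slot of v. Unlike received_by, which quantifies over real
  intervals, this only quantifies over countably many slots and frames, so it is measurable.\<close>
definition slot_reception :: "real \<Rightarrow> 'n \<Rightarrow> 'n \<Rightarrow> ('n \<times> nat \<Rightarrow> 'c \<times> bool) \<Rightarrow> bool" where
  "slot_reception T v u \<omega> \<longleftrightarrow> (\<exists>c \<in> A u. \<exists>k j.
     (j < 3 \<and> nbr_on E A u v c \<and> frame_schedule.frame_time (C v) (s v) L (real k + real (Suc j) / 3) \<le> T \<and>
      slot_iv (C v) (s v) L k j \<subseteq> (\<Union>m. frame_iv (C u) (s u) L m)) \<and>
     \<omega> (v, k) = (c, True) \<and>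
     (\<forall>m. frame_iv (C u) (s u) L m \<inter> slot_iv (C v) (s v) L k j \<noteq> {} \<longrightarrow> \<omega> (u, m) = (c, False)) \<and>
     (\<forall>w \<in> V. nbr_on E A u w c \<and> w \<noteq> v \<longrightarrow>
        (\<forall>m j'. j' < 3 \<and> slot_iv (C w) (s w) L m j' \<inter> slot_iv (C v) (s v) L k j \<noteq> {} \<longrightarrow>
           \<omega> (w, m) \<noteq> (c, True))))"

lemma pred_outcome_coordinate [measurable]: "Measurable.pred outcomes (\<lambda>\<omega>. \<omega> j = x)"
  using pred_PiM_pmf_coordinate[where p = choice_pmf and Q = "\<lambda>y. y = x"] by simp

lemma pred_slot_reception:
  assumes "u \<in> V"
  shows "Measurable.pred outcomes (slot_reception T v u)"
proof -
  have "finite (A u)" using chans assms by auto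
  then show ?thesis unfolding slot_reception_def using finV by measurable
qed

lemma slot_reception_if_received_by:
  assumes "E v u" and "received_by E A C s L \<omega> T v u"
  shows "slot_reception T v u \<omega>"
proof -
  have uV: "u \<in> V" and vV: "v \<in> V" using assms(1) E_in by auto
  interpret U: frame_schedule "C u" \<delta> "s u" L by (rule node_frame_schedule[OF uV])
  interpret W: frame_schedule "C v" \<delta> "s v" L by (rule node_frame_schedule[OF vV])
  obtain c a b k j where b: "b \<le> T" and nb: "nbr_on E A u v c"
    and listen: "\<forall>t\<in>{a..<b}. listens_at C s L \<omega> u c t"
    and j: "j < 3" and vk: "fst (\<omega> (v, k)) = c" "snd (\<omega> (v, k))"
    and slot: "slot_iv (C v) (s v) L k j \<subseteq> {a..<b}"
    and quiet: "\<forall>w. nbr_on E A u w c \<and> w \<noteq> v \<longrightarrow> (\<forall>t\<in>{a..<b}. \<not> transmits_at C s L \<omega> w c t)"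
    using assms(2) unfolding received_by_def by blast
  have lo_hi: "W.frame_time (real k + real j / 3) < W.frame_time (real k + real (Suc j) / 3)"
    by (rule W.frame_time_strict_mono) simp
  have slot_end: "W.frame_time (real k + real (Suc j) / 3) \<le> b"
  proof (rule ccontr)
    assume "\<not> ?thesis"
    then have "b \<in> slot_iv (C v) (s v) L k j" using slot lo_hi by (auto simp: W.slot_iv_eq)
    then show False using slot by auto
  qed
  have listen_frames: "\<forall>m. frame_iv (C u) (s u) L m \<inter> slot_iv (C v) (s v) L k j \<noteq> {} \<longrightarrow> \<omega> (u, m) = (c, False)"
  proof (intro allI impI)
    fix m assume "frame_iv (C u) (s u) L m \<inter> slot_iv (C v) (s v) L k j \<noteq> {}"
    then obtain t where t: "t \<in> frame_iv (C u) (s u) L m" "t \<in> slot_iv (C v) (s v) L k j" by blast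
    obtain m' where "t \<in> frame_iv (C u) (s u) L m'" "fst (\<omega> (u, m')) = c" "\<not> snd (\<omega> (u, m'))"
      using listen slot t(2) by (auto simp: listens_at_def)
    moreover from this(1) have "m' = m" using t(1) by (rule U.frame_iv_unique)
    ultimately show "\<omega> (u, m) = (c, False)" by (simp add: prod_eq_iff)
  qed
  have others_silent: "\<forall>w \<in> V. nbr_on E A u w c \<and> w \<noteq> v \<longrightarrow>
      (\<forall>m j'. j' < 3 \<and> slot_iv (C w) (s w) L m j' \<inter> slot_iv (C v) (s v) L k j \<noteq> {} \<longrightarrow> \<omega> (w, m) \<noteq> (c, True))"
  proof (intro ballI allI impI notI)
    fix w m j' assume w: "nbr_on E A u w c \<and> w \<noteq> v"
      and m: "j' < 3 \<and> slot_iv (C w) (s w) L m j' \<inter> slot_iv (C v) (s v) L k j \<noteq> {}"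
      and tx: "\<omega> (w, m) = (c, True)"
    obtain t where t: "t \<in> slot_iv (C w) (s w) L m j'" "t \<in> slot_iv (C v) (s v) L k j" using m by blast
    have "transmits_at C s L \<omega> w c t"
      unfolding transmits_at_def using m t(1) tx by (intro exI[of _ m] exI[of _ j']) simp
    then show False using quiet w t(2) slot by blast
  qed
  have "c \<in> A u" using nb by (simp add: nbr_on_def)
  moreover have "slot_iv (C v) (s v) L k j \<subseteq> (\<Union>m. frame_iv (C u) (s u) L m)"
    using listen slot unfolding listens_at_def by blast
  moreover have "\<omega> (v, k) = (c, True)" using vk by (simp add: prod_eq_iff)
  moreover have "W.frame_time (real k + real (Suc j) / 3) \<le> T" using slot_end b by linarith
  ultimately show ?thesis
    unfolding slot_reception_def using j nb listen_frames others_silent by blast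
qed

lemma received_by_if_slot_reception:
  assumes "E v u" and "slot_reception T v u \<omega>"
  shows "received_by E A C s L \<omega> T v u"
proof -
  have vV: "v \<in> V" using assms(1) E_in by auto
  interpret W: frame_schedule "C v" \<delta> "s v" L by (rule node_frame_schedule[OF vV])
  obtain c k j where j: "j < 3" and nb: "nbr_on E A u v c"
    and slot_end: "W.frame_time (real k + real (Suc j) / 3) \<le> T"
    and covered: "slot_iv (C v) (s v) L k j \<subseteq> (\<Union>m. frame_iv (C u) (s u) L m)"
    and vk: "\<omega> (v, k) = (c, True)"
    and listen: "\<forall>m. frame_iv (C u) (s u) L m \<inter> slot_iv (C v) (s v) L k j \<noteq> {} \<longrightarrow> \<omega> (u, m) = (c, False)"
    and silent: "\<forall>w \<in> V. nbr_on E A u w c \<and> w \<noteq> v \<longrightarrow>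
        (\<forall>m j'. j' < 3 \<and> slot_iv (C w) (s w) L m j' \<inter> slot_iv (C v) (s v) L k j \<noteq> {} \<longrightarrow> \<omega> (w, m) \<noteq> (c, True))"
    using assms(2) unfolding slot_reception_def by blast
  define lo where "lo = W.frame_time (real k + real j / 3)"
  define hi where "hi = W.frame_time (real k + real (Suc j) / 3)"
  have slot: "slot_iv (C v) (s v) L k j = {lo..<hi}" by (simp add: W.slot_iv_eq lo_def hi_def)
  have "\<forall>t \<in> {lo..<hi}. listens_at C s L \<omega> u c t"
  proof
    fix t assume t: "t \<in> {lo..<hi}"
    obtain m where "t \<in> frame_iv (C u) (s u) L m" using covered t slot by blast
    then show "listens_at C s L \<omega> u c t" using listen t slot unfolding listens_at_def by fastforce
  qed
  moreover have "\<forall>w. nbr_on E A u w c \<and> w \<noteq> v \<longrightarrow> (\<forall>t \<in> {lo..<hi}. \<not> transmits_at C s L \<omega> w c t)"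
  proof (intro allI impI ballI notI)
    fix w t assume w: "nbr_on E A u w c \<and> w \<noteq> v" and t: "t \<in> {lo..<hi}"
      and "transmits_at C s L \<omega> w c t"
    then obtain m j' where "j' < 3" "t \<in> slot_iv (C w) (s w) L m j'" "\<omega> (w, m) = (c, True)"
      unfolding transmits_at_def by (auto simp: prod_eq_iff)
    moreover have "w \<in> V" using w E_in by (auto simp: nbr_on_def)
    ultimately show False using silent w t slot by blast
  qed
  moreover have "\<exists>k' j'. j' < 3 \<and> fst (\<omega> (v, k')) = c \<and> snd (\<omega> (v, k')) \<and> slot_iv (C v) (s v) L k' j' \<subseteq> {lo..<hi}"
    by (rule exI[of _ k], rule exI[of _ j]) (use j vk slot in simp)
  ultimately show ?thesis
    unfolding received_by_def using nb slot_end hi_def by blast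
qed

lemma sets_received_by:
  assumes "E v u"
  shows "{\<omega> \<in> space outcomes. received_by E A C s L \<omega> T v u} \<in> sets outcomes"
proof -
  have "{\<omega> \<in> space outcomes. received_by E A C s L \<omega> T v u} = {\<omega> \<in> space outcomes. slot_reception T v u \<omega>}"
    using slot_reception_if_received_by received_by_if_slot_reception assms by blast
  moreover have "u \<in> V" using assms E_in by auto
  ultimately show ?thesis using pred_slot_reception by (simp add: pred_def)
qed

lemma sets_all_received_by:
  "{\<omega> \<in> space outcomes. \<forall>u v. E v u \<longrightarrow> received_by E A C s L \<omega> T v u} \<in> sets outcomes"
proof -
  have "{\<omega> \<in> space outcomes. \<forall>u v. E v u \<longrightarrow> received_by E A C s L \<omega> T v u}
      = {\<omega> \<in> space outcomes. \<forall>u \<in> V. \<forall>v \<in> V. E v u \<longrightarrow> slot_reception T v u \<omega>}"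
    using slot_reception_if_received_by received_by_if_slot_reception E_in by blast
  moreover have "Measurable.pred outcomes (\<lambda>\<omega>. \<forall>u \<in> V. \<forall>v \<in> V. E v u \<longrightarrow> slot_reception T v u \<omega>)"
    using finV pred_slot_reception by measurable
  ultimately show ?thesis by (simp add: pred_def)
qed

end

section \<open>Trials along one link\<close>

locale link = multichannel_network V A E C s L \<delta> Ts Dest
  for V :: "'n set" and A :: "'n \<Rightarrow> 'c set" and E C s L \<delta> Ts Dest +
  fixes u v :: 'n
  assumes link: "E v u"
begin

lemma receiver_in_V: "u \<in> V" and sender_in_V: "v \<in> V"
  using link E_in by auto

lemma receiver_neq_sender: "u \<noteq> v"
  using link E_irrefl by auto

sublocale receiver: frame_schedule "C u" \<delta> "s u" L
  by (rule node_frame_schedule[OF receiver_in_V])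

sublocale sender: frame_schedule "C v" \<delta> "s v" L
  by (rule node_frame_schedule[OF sender_in_V])

text \<open>A slot of v lying inside frame k of u, whenever that frame starts after Ts; the slot
  index n counts slots from the start of v, so it is slot n mod 3 of frame n div 3.\<close>
definition sender_slot :: "nat \<Rightarrow> nat" where
  "sender_slot k = (SOME n. receiver.frame_time (real k) \<le> sender.frame_time (real n / 3)
     \<and> sender.frame_time (real (Suc n) / 3) \<le> receiver.frame_time (real k) + 2 * L / (3 * (1 - \<delta>)))"

definition window_start :: "nat \<Rightarrow> real" where
  "window_start k = sender.frame_time (real (sender_slot k) / 3)"

definition window_end :: "nat \<Rightarrow> real" where
  "window_end k = sender.frame_time (real (Suc (sender_slot k)) / 3)"

abbreviation window :: "nat \<Rightarrow> real set" where
  "window k \<equiv> {window_start k ..< window_end k}"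

lemma window_bounds:
  assumes "Ts \<le> receiver.frame_time (real k)"
  shows "receiver.frame_time (real k) \<le> window_start k"
    and "window_end k \<le> receiver.frame_time (real k) + 2 * L / (3 * (1 - \<delta>))"
proof -
  have "s v \<le> receiver.frame_time (real k)" using Ts sender_in_V assms by force
  from someI_ex[OF sender.exists_slot_after[OF this]]
  show "receiver.frame_time (real k) \<le> window_start k"
    and "window_end k \<le> receiver.frame_time (real k) + 2 * L / (3 * (1 - \<delta>))"
    unfolding window_start_def window_end_def sender_slot_def by blast+
qed

lemma window_eq_slot_iv:
  "window k = slot_iv (C v) (s v) L (sender_slot k div 3) (sender_slot k mod 3)"
  by (simp add: window_start_def window_end_def sender.slot_iv_div_mod)

lemma window_start_less_end: "window_start k < window_end k"
  unfolding window_start_def window_end_def by (rule sender.frame_time_strict_mono) simp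

lemma window_length: "window_end k - window_start k \<le> L / (3 * (1 - \<delta>))"
  using sender.frame_time_diff_bounds(2)[of "real (sender_slot k) / 3" "real (Suc (sender_slot k)) / 3"]
  by (simp add: window_start_def window_end_def field_simps)

lemma window_end_le_frame_end:
  assumes "Ts \<le> receiver.frame_time (real k)"
  shows "window_end k \<le> receiver.frame_time (real k + 1)"
proof -
  have "2 * L / (3 * (1 - \<delta>)) \<le> L / (1 + \<delta>)"
    using receiver.drift_factors_pos L_pos delta_le by (simp add: field_simps)
  then show ?thesis
    using window_bounds(2)[OF assms] receiver.frame_duration_bounds(1)[of k] by linarith
qed

lemma window_subset_receiver_frame:
  assumes "Ts \<le> receiver.frame_time (real k)"
  shows "window k \<subseteq> frame_iv (C u) (s u) L k"
  using window_bounds(1)[OF assms] window_end_le_frame_end[OF assms] by (auto simp: receiver.frame_iv_eq)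

lemma window_subset_sender_frame:
  "window k \<subseteq> frame_iv (C v) (s v) L (sender_slot k div 3)"
  unfolding window_eq_slot_iv by (rule sender.slot_iv_subset_frame_iv) simp

definition frames_meeting_window :: "'n \<Rightarrow> nat \<Rightarrow> nat set" where
  "frames_meeting_window w k = {m. frame_iv (C w) (s w) L m \<inter> window k \<noteq> {}}"

lemma finite_frames_meeting_window: "w \<in> V \<Longrightarrow> finite (frames_meeting_window w k)"
  and card_frames_meeting_window: "w \<in> V \<Longrightarrow> card (frames_meeting_window w k) \<le> 2"
  using frame_schedule.frames_meeting_interval[OF node_frame_schedule _ window_length] delta_le
  by (auto simp: frames_meeting_window_def)

definition interferers :: "'n set" where
  "interferers = {w \<in> V. E u w \<and> w \<noteq> v}"

text \<open>Trial k succeeds when, for some common channel c, u listens on c during frame k, v transmits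
  on c in its frame containing the window, and no other neighbour of u transmits on c in any of its
  frames meeting the window. It depends only on the choices indexed by trial_coords k.\<close>
definition trial_coords :: "nat \<Rightarrow> ('n \<times> nat) set" where
  "trial_coords k = insert (u, k) (insert (v, sender_slot k div 3)
     (SIGMA w:interferers. frames_meeting_window w k))"

definition trial_pattern :: "'c \<Rightarrow> 'n \<times> nat \<Rightarrow> ('c \<times> bool) set" where
  "trial_pattern c j = (if fst j = u then {(c, False)} else if fst j = v then {(c, True)} else - {(c, True)})"

definition trial_success :: "nat \<Rightarrow> ('n \<times> nat \<Rightarrow> 'c \<times> bool) set" where
  "trial_success k = (\<Union>c \<in> A u \<inter> A v. PiE (trial_coords k) (trial_pattern c))"

lemma finite_interferers: "finite interferers"
  using finV by (simp add: interferers_def)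

lemma trial_coords_subset: "trial_coords k \<subseteq> V \<times> UNIV"
  using receiver_in_V sender_in_V by (auto simp: trial_coords_def interferers_def)

lemma finite_trial_coords: "finite (trial_coords k)"
  unfolding trial_coords_def using finite_interferers finite_frames_meeting_window
  by (auto simp: interferers_def intro!: finite_SigmaI)

lemma sets_trial_success: "trial_success k \<in> sets (PiM (trial_coords k) (\<lambda>j. measure_pmf (choice_pmf j)))"
  unfolding trial_success_def using finite_trial_coords chans receiver_in_V
  by (intro sets.finite_UN) (auto intro!: sets_PiM_I_finite)

lemma received_by_if_trial_success:
  assumes k: "k \<in> receiver.full_frames Ts T"
    and success: "restrict \<omega> (trial_coords k) \<in> trial_success k"
  shows "received_by E A C s L \<omega> T v u"
proof -
  have start: "Ts \<le> receiver.frame_time (real k)" and stop: "receiver.frame_time (real k + 1) \<le> T"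
    using k by (auto simp: receiver.full_frames_def)
  obtain c where c: "c \<in> A u \<inter> A v" and pattern: "\<And>j. j \<in> trial_coords k \<Longrightarrow> \<omega> j \<in> trial_pattern c j"
    using success unfolding trial_success_def by (auto simp: PiE_iff)
  have listen: "\<omega> (u, k) = (c, False)"
    using pattern[of "(u, k)"] by (simp add: trial_coords_def trial_pattern_def)
  have transmit: "\<omega> (v, sender_slot k div 3) = (c, True)"
    using pattern[of "(v, sender_slot k div 3)"] receiver_neq_sender
    by (simp add: trial_coords_def trial_pattern_def)
  have quiet: "\<omega> (w, m) \<noteq> (c, True)" if "w \<in> interferers" "m \<in> frames_meeting_window w k" for w m
  proof -
    have "w \<noteq> u" "w \<noteq> v" using that(1) E_irrefl by (auto simp: interferers_def)
    then show ?thesis using pattern[of "(w, m)"] that by (auto simp: trial_coords_def trial_pattern_def)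
  qed
  have "\<not> transmits_at C s L \<omega> w c t"
    if w: "nbr_on E A u w c \<and> w \<noteq> v" and t: "t \<in> window k" for w t
  proof
    assume "transmits_at C s L \<omega> w c t"
    then obtain m j where m: "j < 3" "t \<in> slot_iv (C w) (s w) L m j" "\<omega> (w, m) = (c, True)"
      unfolding transmits_at_def by (auto simp: prod_eq_iff)
    have wV: "w \<in> V" using w E_in by (auto simp: nbr_on_def)
    then have "t \<in> frame_iv (C w) (s w) L m"
      using frame_schedule.slot_iv_subset_frame_iv[OF node_frame_schedule[OF wV] m(1)] m(2) by blast
    then have "m \<in> frames_meeting_window w k" using t by (auto simp: frames_meeting_window_def)
    moreover have "w \<in> interferers" using w wV by (simp add: interferers_def nbr_on_def)
    ultimately show False using quiet m(3) by blast
  qed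
  moreover have "\<forall>t \<in> window k. listens_at C s L \<omega> u c t"
    using window_subset_receiver_frame[OF start] listen by (auto simp: listens_at_def)
  moreover have "\<exists>k' j. j < 3 \<and> fst (\<omega> (v, k')) = c \<and> snd (\<omega> (v, k'))
      \<and> slot_iv (C v) (s v) L k' j \<subseteq> window k"
    by (rule exI[of _ "sender_slot k div 3"], rule exI[of _ "sender_slot k mod 3"])
      (use transmit window_eq_slot_iv[of k] in auto)
  moreover have "window_end k \<le> T" using window_end_le_frame_end[OF start] stop by linarith
  moreover have "nbr_on E A u v c" using c link E_sym by (simp add: nbr_on_def)
  ultimately show ?thesis unfolding received_by_def by blast
qed

lemma trial_coord_cases:
  assumes "j \<in> trial_coords k"
  shows "j = (u, k) \<or> fst j \<in> V - {u} \<and>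
    frame_iv (C (fst j)) (s (fst j)) L (snd j) \<inter> window k \<noteq> {}"
proof -
  have "window_start k \<in> frame_iv (C v) (s v) L (sender_slot k div 3) \<inter> window k"
    using window_subset_sender_frame[of k] window_start_less_end[of k] by auto
  then show ?thesis
    using assms sender_in_V receiver_neq_sender E_irrefl
    by (auto simp: trial_coords_def interferers_def frames_meeting_window_def)
qed

text \<open>Windows three receiver frames apart are separated by two frames of u, which is longer
  than any frame of another node.\<close>
lemma frame_misses_a_distant_window:
  assumes x: "x \<in> V" and k1: "Ts \<le> receiver.frame_time (real k1)" and k2: "Ts \<le> receiver.frame_time (real k2)"
    and far: "k1 + 3 \<le> k2"
  shows "frame_iv (C x) (s x) L m \<inter> window k1 = {} \<or> frame_iv (C x) (s x) L m \<inter> window k2 = {}"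
proof (rule ccontr)
  assume "\<not> ?thesis"
  then obtain t1 t2 where t1: "t1 \<in> frame_iv (C x) (s x) L m" "t1 \<in> window k1"
    and t2: "t2 \<in> frame_iv (C x) (s x) L m" "t2 \<in> window k2"
    by blast
  have "t1 < receiver.frame_time (real k1 + 1)" using window_subset_receiver_frame[OF k1] t1(2)
    by (auto simp: receiver.frame_iv_eq)
  moreover have "receiver.frame_time (real k2) \<le> t2" using window_subset_receiver_frame[OF k2] t2(2)
    by (auto simp: receiver.frame_iv_eq)
  moreover have "receiver.frame_time (real k1 + 3) \<le> receiver.frame_time (real k2)"
    using far by (intro receiver.frame_time_mono) simp
  moreover have "2 * L / (1 + \<delta>) \<le> receiver.frame_time (real k1 + 3) - receiver.frame_time (real k1 + 1)"
    using receiver.frame_time_diff_bounds(1)[of "real k1 + 1" "real k1 + 3"] by simp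
  moreover have "t2 - t1 < L / (1 - \<delta>)"
    by (rule frame_schedule.frame_iv_diameter[OF node_frame_schedule[OF x] t1(1) t2(1)])
  moreover have "L / (1 - \<delta>) \<le> 2 * L / (1 + \<delta>)"
    using receiver.drift_factors_pos L_pos delta_le by (simp add: field_simps)
  ultimately show False by linarith
qed

lemma trial_coords_disjoint:
  assumes k1: "Ts \<le> receiver.frame_time (real k1)" and k2: "Ts \<le> receiver.frame_time (real k2)"
    and far: "k1 + 3 \<le> k2"
  shows "trial_coords k1 \<inter> trial_coords k2 = {}"
proof (rule ccontr)
  assume "trial_coords k1 \<inter> trial_coords k2 \<noteq> {}"
  then obtain j where j: "j \<in> trial_coords k1" "j \<in> trial_coords k2" by blast
  with far have "fst j \<in> V"
    and "frame_iv (C (fst j)) (s (fst j)) L (snd j) \<inter> window k1 \<noteq> {}"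
    and "frame_iv (C (fst j)) (s (fst j)) L (snd j) \<inter> window k2 \<noteq> {}"
    using trial_coord_cases[OF j(1)] trial_coord_cases[OF j(2)] by auto
  then show False using frame_misses_a_distant_window[OF _ k1 k2 far] by blast
qed

lemma prob_interferers_silent:
  assumes "c \<in> A u"
  shows "1 / 3 \<le> (\<Prod>j \<in> (SIGMA w:interferers. frames_meeting_window w k). 1 - pmf (choice_pmf j) (c, True))"
proof -
  let ?S = "SIGMA w:interferers. frames_meeting_window w k"
  let ?p = "\<lambda>j. pmf (choice_pmf j) (c, True)"
  have per_node: "(\<Sum>m \<in> frames_meeting_window w k. ?p (w, m)) \<le> (if c \<in> A w then 2 / (3 * real Dest) else 0)"
    if w: "w \<in> interferers" for w
  proof -
    have wV: "w \<in> V" using w by (simp add: interferers_def)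
    have "(\<Sum>m \<in> frames_meeting_window w k. ?p (w, m))
        \<le> real (card (frames_meeting_window w k)) * (if c \<in> A w then 1 / (3 * real Dest) else 0)"
      by (rule sum_bounded_above) (simp add: pmf_choice_transmit[OF wV])
    also have "\<dots> \<le> 2 * (if c \<in> A w then 1 / (3 * real Dest) else 0)"
      using card_frames_meeting_window[OF wV, of k] by (intro mult_right_mono) auto
    finally show ?thesis by (cases "c \<in> A w") simp_all
  qed
  have "(\<Sum>j \<in> ?S. ?p j) = (\<Sum>w \<in> interferers. \<Sum>m \<in> frames_meeting_window w k. ?p (w, m))"
    using sum.Sigma[of interferers "\<lambda>w. frames_meeting_window w k" "\<lambda>w m. ?p (w, m)"]
      finite_interferers finite_frames_meeting_window by (simp add: interferers_def split_def)
  also have "\<dots> \<le> (\<Sum>w \<in> interferers. if c \<in> A w then 2 / (3 * real Dest) else 0)"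
    by (rule sum_mono) (rule per_node)
  also have "\<dots> = real (card {w \<in> interferers. c \<in> A w}) * (2 / (3 * real Dest))"
    using finite_interferers by (simp add: sum.If_cases Int_def)
  also have "\<dots> \<le> real Dest * (2 / (3 * real Dest))"
  proof -
    have "{w \<in> interferers. c \<in> A w} \<subseteq> {w \<in> V. nbr_on E A u w c}"
      using assms by (auto simp: interferers_def nbr_on_def)
    then have "card {w \<in> interferers. c \<in> A w} \<le> deg V E A u c"
      unfolding deg_def using finV by (intro card_mono) auto
    then show ?thesis using deg_le_Dest[OF receiver_in_V assms] by (intro mult_right_mono) auto
  qed
  also have "\<dots> = 2 / 3" using Dest_pos by simp
  finally have "(\<Sum>j \<in> ?S. ?p j) \<le> 2 / 3" .
  moreover have "1 - (\<Sum>j \<in> ?S. ?p j) \<le> (\<Prod>j \<in> ?S. 1 - ?p j)"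
    by (rule Weierstrass_prod_ineq) (simp add: pmf_le_1)
  ultimately show ?thesis by linarith
qed

lemma prob_trial_pattern:
  assumes c: "c \<in> A u \<inter> A v"
  shows "1 / (6 * real (card (A u)) * tx_denom)
    \<le> measure outcomes (cylinder (trial_coords k) (PiE (trial_coords k) (trial_pattern c)))"
proof -
  let ?S = "SIGMA w:interferers. frames_meeting_window w k"
  let ?v = "(v, sender_slot k div 3)"
  have u_notin: "(u, k) \<notin> insert ?v ?S" using receiver_neq_sender E_irrefl by (auto simp: interferers_def)
  have v_notin: "?v \<notin> ?S" by (auto simp: interferers_def)
  have fin_S: "finite ?S" using finite_trial_coords[of k] by (simp add: trial_coords_def)
  have pattern_S: "trial_pattern c j = - {(c, True)}" if "j \<in> ?S" for j
    using that E_irrefl by (auto simp: interferers_def trial_pattern_def)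
  have "measure outcomes (cylinder (trial_coords k) (PiE (trial_coords k) (trial_pattern c)))
      = (\<Prod>j \<in> trial_coords k. measure_pmf.prob (choice_pmf j) (trial_pattern c j))"
    by (rule measure_PiM_pmf_prod_emb_PiE[OF trial_coords_subset finite_trial_coords])
  also have "\<dots> = pmf (choice_pmf (u, k)) (c, False)
      * (pmf (choice_pmf ?v) (c, True) * (\<Prod>j \<in> ?S. 1 - pmf (choice_pmf j) (c, True)))"
  proof -
    have "trial_pattern c (u, k) = {(c, False)}" "trial_pattern c ?v = {(c, True)}"
      using receiver_neq_sender by (simp_all add: trial_pattern_def)
    moreover have "(\<Prod>j \<in> ?S. measure_pmf.prob (choice_pmf j) (trial_pattern c j))
        = (\<Prod>j \<in> ?S. 1 - pmf (choice_pmf j) (c, True))"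
      by (rule prod.cong) (simp_all add: pattern_S measure_pmf_compl_singleton)
    ultimately show ?thesis
      unfolding trial_coords_def using fin_S u_notin v_notin by (simp add: measure_pmf_single)
  qed
  finally have eq: "measure outcomes (cylinder (trial_coords k) (PiE (trial_coords k) (trial_pattern c))) = \<dots>" .
  have "1 / (6 * real (card (A u)) * tx_denom) = 1 / (2 * real (card (A u))) * (1 / tx_denom * (1 / 3))"
    by (simp add: field_simps)
  also have "\<dots> \<le> pmf (choice_pmf (u, k)) (c, False)
      * (pmf (choice_pmf ?v) (c, True) * (\<Prod>j \<in> ?S. 1 - pmf (choice_pmf j) (c, True)))"
    using pmf_choice_listen[OF receiver_in_V, of c k] pmf_choice_transmit_lower[OF sender_in_V, of c]
      prob_interferers_silent[of c k] c tx_denom_pos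
    by (intro mult_mono) auto
  finally show ?thesis using eq by simp
qed

lemma prob_trial_success:
  "min_span_ratio V E A / (6 * tx_denom) \<le> measure outcomes (cylinder (trial_coords k) (trial_success k))"
proof -
  let ?R = "\<lambda>c. cylinder (trial_coords k) (PiE (trial_coords k) (trial_pattern c))"
  have fin: "finite (A u \<inter> A v)" using chans receiver_in_V by auto
  have disjoint: "disjoint_family_on ?R (A u \<inter> A v)"
    unfolding disjoint_family_on_def
  proof (intro ballI impI)
    fix c1 c2 :: 'c assume "c1 \<noteq> c2"
    have uk: "(u, k) \<in> trial_coords k" by (simp add: trial_coords_def)
    show "?R c1 \<inter> ?R c2 = {}"
    proof (intro equalityI subsetI)
      fix x assume "x \<in> ?R c1 \<inter> ?R c2"
      then have "x (u, k) \<in> trial_pattern c1 (u, k)" "x (u, k) \<in> trial_pattern c2 (u, k)"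
        using uk by (auto simp: prod_emb_def PiE_iff)
      then show "x \<in> {}" using \<open>c1 \<noteq> c2\<close> by (simp add: trial_pattern_def)
    qed simp
  qed
  have "cylinder (trial_coords k) (trial_success k) = (\<Union>c \<in> A u \<inter> A v. ?R c)"
    unfolding trial_success_def by (rule prod_emb_UN)
  then have "measure outcomes (cylinder (trial_coords k) (trial_success k)) = (\<Sum>c \<in> A u \<inter> A v. measure outcomes (?R c))"
    using prob_space_outcomes fin disjoint trial_coords_subset finite_trial_coords
    by (simp add: prob_space_def finite_measure.finite_measure_finite_Union measurable_prod_emb sets_PiM_I_finite subset_eq)
  moreover have "(\<Sum>c \<in> A u \<inter> A v. 1 / (6 * real (card (A u)) * tx_denom)) \<le> (\<Sum>c \<in> A u \<inter> A v. measure outcomes (?R c))"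
    by (rule sum_mono) (rule prob_trial_pattern)
  moreover have "min_span_ratio V E A / (6 * tx_denom) \<le> (\<Sum>c \<in> A u \<inter> A v. 1 / (6 * real (card (A u)) * tx_denom))"
    using min_span_ratio_le[OF link] tx_denom_pos by (simp add: Int_commute divide_right_mono field_simps)
  ultimately show ?thesis by linarith
qed

lemma trial_coords_disjoint_residue_class:
  assumes "R \<subseteq> receiver.full_frames Ts T" and "\<And>k. k \<in> R \<Longrightarrow> k mod 3 = r"
  shows "disjoint_family_on trial_coords R"
  unfolding disjoint_family_on_def
proof (intro ballI impI)
  have start: "Ts \<le> receiver.frame_time (real k)" if "k \<in> R" for k
    using that assms(1) by (auto simp: receiver.full_frames_def)
  fix k1 k2 assume k: "k1 \<in> R" "k2 \<in> R" "k1 \<noteq> k2"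
  have "k1 mod 3 = k2 mod 3" using k assms(2) by simp
  then have "k1 + 3 \<le> k2 \<or> k2 + 3 \<le> k1" using k(3) by presburger
  then show "trial_coords k1 \<inter> trial_coords k2 = {}"
    using trial_coords_disjoint[OF start start] k by (metis inf_commute)
qed

definition trial_failure :: "nat \<Rightarrow> ('n \<times> nat \<Rightarrow> 'c \<times> bool) set" where
  "trial_failure k = cylinder (trial_coords k)
     (space (PiM (trial_coords k) (\<lambda>j. measure_pmf (choice_pmf j))) - trial_success k)"

lemma sets_trial_failure: "trial_failure k \<in> sets outcomes"
  unfolding trial_failure_def using trial_coords_subset[of k] sets_trial_success[of k]
  by (intro measurable_prod_emb) auto

lemma not_received_subset_trial_failure:
  assumes "k \<in> receiver.full_frames Ts T"
  shows "{\<omega> \<in> space outcomes. \<not> received_by E A C s L \<omega> T v u} \<subseteq> trial_failure k"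
proof
  fix \<omega> assume \<omega>: "\<omega> \<in> {\<omega> \<in> space outcomes. \<not> received_by E A C s L \<omega> T v u}"
  then have "restrict \<omega> (trial_coords k) \<notin> trial_success k"
    using received_by_if_trial_success[OF assms] by blast
  moreover have "restrict \<omega> (trial_coords k) \<in> space (PiM (trial_coords k) (\<lambda>j. measure_pmf (choice_pmf j)))"
    using \<omega> trial_coords_subset[of k] by (auto simp: space_PiM)
  ultimately show "\<omega> \<in> trial_failure k" using \<omega> by (auto simp: trial_failure_def prod_emb_def space_PiM)
qed

lemma prob_trial_failure:
  "measure outcomes (trial_failure k) \<le> 1 - min_span_ratio V E A / (6 * tx_denom)"
  unfolding trial_failure_def
  using measure_cylinder_compl[OF trial_coords_subset sets_trial_success] prob_trial_success[of k] by simp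

lemma prob_trial_failures:
  assumes "R \<subseteq> receiver.full_frames Ts T" and "\<And>k. k \<in> R \<Longrightarrow> k mod 3 = r" and "finite R" and "R \<noteq> {}"
  shows "measure outcomes (\<Inter>k \<in> R. trial_failure k)
    \<le> exp (- (min_span_ratio V E A / (6 * tx_denom)) * real (card R))"
proof -
  interpret prob_space outcomes by (rule prob_space_outcomes)
  define q where "q = min_span_ratio V E A / (6 * tx_denom)"
  have "q \<le> 1" using prob_trial_success[of 0] prob_le_1 unfolding q_def by (meson order.trans)
  have "measure outcomes (\<Inter>k \<in> R. trial_failure k) = (\<Prod>k \<in> R. measure outcomes (trial_failure k))"
    unfolding trial_failure_def using receiver_in_V assms trial_coords_subset sets_trial_success
      trial_coords_disjoint_residue_class[OF assms(1,2)]
    by (intro measure_PiM_pmf_INT_prod_emb_disjoint sets.compl_sets) auto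
  also have "\<dots> \<le> (\<Prod>k \<in> R. 1 - q)"
    using prob_trial_failure by (intro prod_mono) (simp add: q_def)
  also have "\<dots> \<le> exp (- q) ^ card R"
    using \<open>q \<le> 1\<close> exp_ge_add_one_self[of "- q"] by (simp add: power_mono)
  also have "\<dots> = exp (- q * real (card R))"
    by (simp add: exp_of_nat_mult[symmetric] mult.commute)
  finally show ?thesis by (simp add: q_def)
qed

lemma prob_not_received_le:
  assumes X: "X > 0" "X \<le> real (full_frames_by (C u) (s u) L Ts T)"
  shows "measure outcomes {\<omega> \<in> space outcomes. \<not> received_by E A C s L \<omega> T v u}
    \<le> exp (- (min_span_ratio V E A / (6 * tx_denom)) * (X / 3))"
proof -
  interpret prob_space outcomes by (rule prob_space_outcomes)
  obtain r where r: "card (receiver.full_frames Ts T) \<le> 3 * card {k \<in> receiver.full_frames Ts T. k mod 3 = r}"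
    using card_le_mult_card_residue_class[OF receiver.finite_full_frames] by (metis zero_less_numeral)
  define R where "R = {k \<in> receiver.full_frames Ts T. k mod 3 = r}"
  have R: "R \<subseteq> receiver.full_frames Ts T" "\<And>k. k \<in> R \<Longrightarrow> k mod 3 = r" "finite R"
    using receiver.finite_full_frames by (auto simp: R_def)
  have card_R: "X / 3 \<le> real (card R)" using X(2) r by (simp add: R_def receiver.full_frames_by_eq_card)
  then have "R \<noteq> {}" using X(1) by auto
  have "measure outcomes {\<omega> \<in> space outcomes. \<not> received_by E A C s L \<omega> T v u}
      \<le> measure outcomes (\<Inter>k \<in> R. trial_failure k)"
    using not_received_subset_trial_failure R(1) sets_trial_failure R(3) \<open>R \<noteq> {}\<close>
    by (intro finite_measure_mono sets.finite_INT) blast+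
  also have "\<dots> \<le> exp (- (min_span_ratio V E A / (6 * tx_denom)) * real (card R))"
    by (rule prob_trial_failures[OF R \<open>R \<noteq> {}\<close>])
  also have "\<dots> \<le> exp (- (min_span_ratio V E A / (6 * tx_denom)) * (X / 3))"
  proof -
    have "0 \<le> min_span_ratio V E A / (6 * tx_denom)"
      using min_span_ratio_pos[OF link] tx_denom_pos by simp
    then have "min_span_ratio V E A / (6 * tx_denom) * (X / 3) \<le> min_span_ratio V E A / (6 * tx_denom) * real (card R)"
      using card_R by (intro mult_left_mono)
    then show ?thesis by simp
  qed
  finally show ?thesis .
qed

end

section \<open>Discovery of all links\<close>

context multichannel_network
begin

lemma link_of_edge: "E v u \<Longrightarrow> link V A E C s L \<delta> Ts Dest u v"
  using multichannel_network_axioms by (simp add: link_def link_axioms_def)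

lemma full_frames_by_at_first_time:
  assumes "X > 0" and "V \<noteq> {}" and "x \<in> V"
  shows "X \<le> real (full_frames_by (C x) (s x) L Ts (Inf {T. \<forall>u \<in> V. X \<le> real (full_frames_by (C u) (s u) L Ts T)}))"
proof -
  have "\<exists>\<theta>. \<forall>T. X \<le> real (full_frames_by (C u) (s u) L Ts T) \<longleftrightarrow> \<theta> \<le> T" if "u \<in> V" for u
  proof -
    interpret frame_schedule "C u" \<delta> "s u" L by (rule node_frame_schedule[OF that])
    obtain \<theta> where "\<And>T. X \<le> real (card (full_frames Ts T)) \<longleftrightarrow> \<theta> \<le> T"
      using full_frames_threshold[OF assms(1)] by blast
    then show ?thesis by (auto simp: full_frames_by_eq_card)
  qed
  then obtain \<theta> where \<theta>: "\<And>u T. u \<in> V \<Longrightarrow> X \<le> real (full_frames_by (C u) (s u) L Ts T) \<longleftrightarrow> \<theta> u \<le> T"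
    by metis
  have "{T. \<forall>u \<in> V. X \<le> real (full_frames_by (C u) (s u) L Ts T)} = {T. \<forall>u \<in> V. \<theta> u \<le> T}"
    using \<theta> by auto
  moreover have "Inf {T. \<forall>u \<in> V. \<theta> u \<le> T} = Max (\<theta> ` V)"
    by (rule cInf_eq_minimum) (use finV assms(2) in auto)
  ultimately show ?thesis using \<theta>[OF assms(3)] finV assms(3) by simp
qed

lemma prob_all_received_by_ge:
  assumes "p \<ge> 0"
    and "\<And>u v. E v u \<Longrightarrow> measure outcomes {\<omega> \<in> space outcomes. \<not> received_by E A C s L \<omega> T v u} \<le> p"
  shows "1 - real (card V) ^ 2 * p
    \<le> measure outcomes {\<omega> \<in> space outcomes. \<forall>u v. E v u \<longrightarrow> received_by E A C s L \<omega> T v u}"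
proof -
  interpret prob_space outcomes by (rule prob_space_outcomes)
  define links where "links = {(v, u). E v u}"
  define fail where "fail l = {\<omega> \<in> space outcomes. \<not> received_by E A C s L \<omega> T (fst l) (snd l)}" for l
  have links_sub: "links \<subseteq> V \<times> V" using E_in by (auto simp: links_def)
  then have fin: "finite links" using finV finite_subset by blast
  have fail_sets: "fail l \<in> events" if "l \<in> links" for l
  proof -
    have "fail l = space outcomes - {\<omega> \<in> space outcomes. received_by E A C s L \<omega> T (fst l) (snd l)}"
      by (auto simp: fail_def)
    then show ?thesis using sets_received_by[of "fst l" "snd l"] that by (auto simp: links_def)
  qed
  have "space outcomes - {\<omega> \<in> space outcomes. \<forall>u v. E v u \<longrightarrow> received_by E A C s L \<omega> T v u}
      \<subseteq> (\<Union>l \<in> links. fail l)"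
    by (auto simp: links_def fail_def)
  then have "measure outcomes (space outcomes - {\<omega> \<in> space outcomes. \<forall>u v. E v u \<longrightarrow> received_by E A C s L \<omega> T v u})
      \<le> measure outcomes (\<Union>l \<in> links. fail l)"
    using fin fail_sets by (intro finite_measure_mono sets.finite_UN) auto
  also have "\<dots> \<le> (\<Sum>l \<in> links. measure outcomes (fail l))"
    by (rule finite_measure_subadditive_finite) (use fin fail_sets in auto)
  also have "\<dots> \<le> real (card links) * p"
    using assms(2) by (intro sum_bounded_above) (auto simp: links_def fail_def)
  also have "\<dots> \<le> real (card V) ^ 2 * p"
    using card_mono[OF _ links_sub] finV assms(1)
    by (intro mult_right_mono) (auto simp: card_cartesian_product power2_eq_square simp flip: of_nat_mult)
  finally show ?thesis using prob_compl[OF sets_all_received_by] by simp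
qed

lemma card_ge_2_if_edge:
  assumes "E v u"
  shows "card V \<ge> 2"
proof -
  have "{u, v} \<subseteq> V" "u \<noteq> v" using assms E_in E_irrefl by auto
  then show ?thesis using card_mono[OF finV, of "{u, v}"] by simp
qed

lemma failure_exponent_bound:
  fixes \<epsilon> :: real
  assumes "E v u" and eps: "0 < \<epsilon>" "\<epsilon> < 1"
  defines "X \<equiv> 48 * tx_denom / min_span_ratio V E A * ln (real (card V) ^ 2 / \<epsilon>)"
  shows "X > 0" and "exp (- (min_span_ratio V E A / (6 * tx_denom)) * (X / 3)) \<le> \<epsilon> / real (card V) ^ 2"
proof -
  define l where "l = ln (real (card V) ^ 2 / \<epsilon>)"
  have "(2::real) ^ 2 \<le> real (card V) ^ 2" using card_ge_2_if_edge[OF assms(1)] by (intro power_mono) auto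
  then have "real (card V) ^ 2 / \<epsilon> > 1" using eps by (simp add: less_divide_eq)
  then have l: "l > 0" "exp (- l) = \<epsilon> / real (card V) ^ 2"
    by (simp_all add: l_def exp_minus)
  have X: "X = 48 * tx_denom / min_span_ratio V E A * l" by (simp add: X_def l_def)
  then show "X > 0" using l min_span_ratio_pos[OF assms(1)] tx_denom_pos by simp
  have "min_span_ratio V E A / (6 * tx_denom) * (X / 3) = 8 / 3 * l"
    using X min_span_ratio_pos[OF assms(1)] tx_denom_pos by (simp add: field_simps)
  then have "exp (- (min_span_ratio V E A / (6 * tx_denom)) * (X / 3)) = exp (- (8 / 3 * l))"
    by (simp only: mult_minus_left)
  also have "\<dots> \<le> exp (- l)" using l(1) by simp
  finally show "exp (- (min_span_ratio V E A / (6 * tx_denom)) * (X / 3)) \<le> \<epsilon> / real (card V) ^ 2"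
    using l(2) by simp
qed

lemma prob_all_received_by:
  fixes \<epsilon> :: real
  assumes eps: "0 < \<epsilon>" "\<epsilon> < 1" and "V \<noteq> {}"
  defines "X \<equiv> 48 * tx_denom / min_span_ratio V E A * ln (real (card V) ^ 2 / \<epsilon>)"
  defines "Tf \<equiv> Inf {T. \<forall>u \<in> V. X \<le> real (full_frames_by (C u) (s u) L Ts T)}"
  shows "1 - \<epsilon> \<le> measure outcomes {\<omega> \<in> space outcomes. \<forall>u v. E v u \<longrightarrow> received_by E A C s L \<omega> Tf v u}"
proof (cases "\<exists>u v. E v u")
  case False
  then show ?thesis using prob_space.prob_space[OF prob_space_outcomes] eps by simp
next
  case True
  then obtain u0 v0 where e0: "E v0 u0" by blast
  note X = failure_exponent_bound[OF e0 eps, folded X_def]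
  have "measure outcomes {\<omega> \<in> space outcomes. \<not> received_by E A C s L \<omega> Tf v u} \<le> \<epsilon> / real (card V) ^ 2"
    if "E v u" for u v
  proof -
    have "X \<le> real (full_frames_by (C u) (s u) L Ts Tf)"
      unfolding Tf_def using full_frames_by_at_first_time X(1) \<open>V \<noteq> {}\<close> that E_in by blast
    from link.prob_not_received_le[OF link_of_edge[OF that] X(1) this]
    show ?thesis using X(2) by linarith
  qed
  then show ?thesis
    using prob_all_received_by_ge[of "\<epsilon> / real (card V) ^ 2"] eps card_ge_2_if_edge[OF e0] by simp
qed

end

theorem mainTheorem6:
  fixes V :: "'n set" and A :: "'n \<Rightarrow> 'c set" and E :: "'n \<Rightarrow> 'n \<Rightarrow> bool"
    and C :: "'n \<Rightarrow> real \<Rightarrow> real" and s :: "'n \<Rightarrow> real"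
    and L \<delta> \<epsilon> Ts :: real and Dest :: nat
  assumes finV: "finite V" and neV: "V \<noteq> {}"
    and chans: "\<forall>u \<in> V. finite (A u) \<and> A u \<noteq> {}"
    and E_in: "\<forall>u v. E u v \<longrightarrow> u \<in> V \<and> v \<in> V"
    and E_sym: "\<forall>u v. E u v \<longrightarrow> E v u"
    and E_irrefl: "\<forall>u. \<not> E u u"
    and E_common: "\<forall>u v. E u v \<longrightarrow> A u \<inter> A v \<noteq> {}"
    and Dest_pos: "Dest > 0"
    and Dest_ge: "max_deg V E A \<le> Dest"
    and clock: "\<forall>u \<in> V. \<forall>t d. d \<ge> 0 \<longrightarrow>
                  (1 - \<delta>) * d \<le> C u (t + d) - C u t \<and> C u (t + d) - C u t \<le> (1 + \<delta>) * d"
    and delta_le: "\<delta> \<le> 1/7"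
    and L_pos: "L > 0"
    and eps: "0 < \<epsilon>" "\<epsilon> < 1"
    and Ts: "\<forall>u \<in> V. s u \<le> Ts"
  shows
    "let N = card V;
         S = max_chan V A;
         \<rho> = min_span_ratio V E A;
         X = 48 * max (2 * real S) (3 * real Dest) / \<rho> * ln (real N ^ 2 / \<epsilon>);
         Tf = Inf {T. \<forall>u \<in> V. real (full_frames_by (C u) (s u) L Ts T) \<ge> X};
         M = alg_space V A Dest
     in measure M {\<omega> \<in> space M. \<forall>u v. E v u \<longrightarrow> received_by E A C s L \<omega> Tf v u} \<ge> 1 - \<epsilon>"
proof -
  interpret multichannel_network V A E C s L \<delta> Ts Dest
    using finV chans E_in E_sym E_irrefl E_common Dest_pos Dest_ge clock delta_le L_pos Ts
    by (simp add: multichannel_network_def)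
  show ?thesis
    using prob_all_received_by[OF eps neV] by (simp add: Let_def alg_space_eq_outcomes tx_denom_def)
qed

end
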